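(* Let $q\in(0,\tfrac12)$ and let $T\sim U(0,1)$, $S\sim U(-1,0)$ be independent. Let $p_3^{SH}$ be the probability that the polynomial $$P_{T,S}(x)=(T+S-1)x^3+\big(1-T-2S+q(S-1-T)\big)x^2+\big(S+q(T-S)\big)x$$ has exactly three distinct roots in $[0,1]$. Then $$ p_3^{SH}= \begin{cases} 1-\dfrac{q}{2(1-q)}-\dfrac{1}{1-2q}\Big[\dfrac{(3\sqrt{q}+2)^2\sqrt{q}\,(5q^{3/2}+3q^2-9q-3\sqrt{q}+4)}{12(\sqrt{q}+1)^3}+\dfrac{-27 q^3-18q^2-32\sqrt{1-2q}\,q+48q+16\sqrt{1-2q}-16}{12q}\Big], & 0<q\leq \tfrac49,\\[3mm] 1-\dfrac{q}{2(1-q)}-\dfrac{8\sqrt{q}\,(1-2q)^2}{3(1-q)^3}, & \tfrac49<q<\tfrac12. \end{cases} $$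
   Context: This models the replicator–mutator dynamics of a two-player two-strategy Stag Hunt game with payoff entries $a_{11}=1$, $a_{22}=0$, $a_{21}=T$, $a_{12}=S$ and symmetric mutation probability $q$; the equilibria of the dynamics are exactly the distinct roots in $[0,1]$ of $P_{T,S}$, and "the game has $k$ equilibria" means $P_{T,S}$ has exactly $k$ distinct roots in $[0,1]$. *)

theory Defs
  imports "HOL-Probability.Probability"
begin

definition P_TS :: "real \<Rightarrow> real \<Rightarrow> real \<Rightarrow> real \<Rightarrow> real" where
  "P_TS q T S x = (T + S - 1) * x ^ 3
      + (1 - T - 2 * S + q * (S - 1 - T)) * x ^ 2
      + (S + q * (T - S)) * x"

definition TS_law :: "(real \<times> real) measure" where
  "TS_law = uniform_measure lborel {0<..<1} \<Otimes>\<^sub>M uniform_measure lborel {-1<..<0}"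

definition p3_SH :: "real \<Rightarrow> real" where
  "p3_SH q = measure TS_law
     {(T, S) \<in> space TS_law. card {x \<in> {0..1}. P_TS q T S x = 0} = 3}"

end

(*
  P_{T,S}(x) = x Q(x) with Q(1) = -q, so P has three distinct roots in [0,1] exactly when the
  quadratic Q has two distinct roots in (0,1).  For T in (0,1) and S in (-1,0) the leading
  coefficient and Q(1) are negative, and the sign conditions on Q(0), the vertex and the
  discriminant reduce this to  q T / (1-q) < -S < ((1-q)(1+T) - 2 sqrt((1-2q) T)) / q.
  By Fubini, p3 is the integral over T of the length of this S-interval cut off at S = -1.
  The upper bound is below 1 exactly for sqrt T between sqrt(1-2q)/(1+sqrt q) and
  sqrt(1-2q)/(1-sqrt q); the second threshold exceeds 1 iff q <= 4/9, which gives the two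
  cases of the formula.
*)

theory Submission
  imports Defs "HOL-Library.Quadratic_Discriminant"
begin

lemma sqrt_less_iff_less_power2: "0 \<le> y \<Longrightarrow> sqrt x < y \<longleftrightarrow> x < y\<^sup>2"
  using real_sqrt_less_iff[of x "y\<^sup>2"] by simp

definition two_roots_in_unit_interval :: "real \<Rightarrow> real \<Rightarrow> real \<Rightarrow> bool" where
  "two_roots_in_unit_interval a b c \<longleftrightarrow> a \<noteq> 0 \<and> discrim a b c > 0 \<and>
     (-b + sqrt (discrim a b c)) / (2 * a) \<in> {0<..<1} \<and>
     (-b - sqrt (discrim a b c)) / (2 * a) \<in> {0<..<1}"

lemma card_roots_cubic_eq_3_iff:
  fixes a b c :: real
  assumes abc: "a + b + c \<noteq> 0"
  shows "card {x \<in> {0..1}. x * (a * x\<^sup>2 + b * x + c) = 0} = 3 \<longleftrightarrow>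
    two_roots_in_unit_interval a b c"
    (is "card ?Z = 3 \<longleftrightarrow> _")
proof (cases "a = 0")
  case True
  have "?Z \<subseteq> {0, -c/b}"
  proof
    fix x assume "x \<in> ?Z"
    then have "x = 0 \<or> b * x + c = 0" using True by auto
    moreover have "b \<noteq> 0 \<or> c \<noteq> 0" using True abc by auto
    ultimately show "x \<in> {0, -c/b}"
      by (cases "b = 0") (auto simp: field_simps)
  qed
  then have "card ?Z \<le> card {0, -c/b}" by (intro card_mono) auto
  also have "\<dots> \<le> 2" by (simp add: card_insert_if)
  finally show ?thesis using True by (simp add: two_roots_in_unit_interval_def)
next
  case False
  define D where "D = discrim a b c"
  define r1 where "r1 = (-b + sqrt D) / (2 * a)"
  define r2 where "r2 = (-b - sqrt D) / (2 * a)"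
  have quad_root_iff: "a * x\<^sup>2 + b * x + c = 0 \<longleftrightarrow> D \<ge> 0 \<and> (x = r1 \<or> x = r2)" for x
    unfolding D_def r1_def r2_def by (rule discriminant_iff[OF False])
  have Z_sub: "?Z \<subseteq> {0, r1, r2}" using quad_root_iff by auto
  have roots_ne_1: "D \<ge> 0 \<Longrightarrow> r1 \<noteq> 1 \<and> r2 \<noteq> 1" using quad_root_iff[of 1] abc by auto
  have roots_eq_iff: "D \<ge> 0 \<Longrightarrow> r1 = r2 \<longleftrightarrow> D = 0"
    using False by (auto simp: r1_def r2_def field_simps)
  have pred_iff: "two_roots_in_unit_interval a b c \<longleftrightarrow> D > 0 \<and> r1 \<in> {0<..<1} \<and> r2 \<in> {0<..<1}"
    using False by (simp add: two_roots_in_unit_interval_def D_def r1_def r2_def)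
  show ?thesis
  proof
    assume card3: "card ?Z = 3"
    have "card {0, r1, r2} \<le> 3" by (simp add: card_insert_if)
    moreover have "card ?Z \<le> card {0, r1, r2}" using Z_sub by (intro card_mono) auto
    ultimately have "card {0, r1, r2} = 3" using card3 by simp
    then have distinct: "r1 \<noteq> 0" "r2 \<noteq> 0" "r1 \<noteq> r2"
      by (auto simp: card_insert_if split: if_splits)
    have "?Z = {0, r1, r2}" using card_subset_eq[OF _ Z_sub] card3 \<open>card {0, r1, r2} = 3\<close> by simp
    then have "r1 \<in> ?Z" "r2 \<in> ?Z" by auto
    then have "D \<ge> 0" "r1 \<in> {0..1}" "r2 \<in> {0..1}" using quad_root_iff distinct by auto
    then show "two_roots_in_unit_interval a b c"
      using pred_iff distinct roots_ne_1 roots_eq_iff by force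
  next
    assume "two_roots_in_unit_interval a b c"
    then have roots: "D > 0" "r1 \<in> {0<..<1}" "r2 \<in> {0<..<1}" using pred_iff by auto
    then have "?Z = {0, r1, r2}" using Z_sub quad_root_iff by auto
    moreover have "r1 \<noteq> r2" using roots roots_eq_iff by auto
    ultimately show "card ?Z = 3" using roots by (simp add: card_insert_if)
  qed
qed

lemma two_roots_in_unit_interval_iff:
  fixes a b c :: real
  assumes a: "a < 0" and abc: "a + b + c < 0"
  shows "two_roots_in_unit_interval a b c \<longleftrightarrow> discrim a b c > 0 \<and> c < 0 \<and> 0 < b \<and> b < -2 * a"
proof (cases "discrim a b c > 0")
  case D: True
  define w where "w = sqrt (discrim a b c)"
  have "0 \<le> w" using D by (simp add: w_def)
  have "two_roots_in_unit_interval a b c \<longleftrightarrow> w < b \<and> b + w < -2 * a"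
    using a \<open>0 \<le> w\<close>
    by (auto simp: two_roots_in_unit_interval_def w_def[symmetric] D
        zero_less_divide_iff divide_less_eq)
  also have "w < b \<longleftrightarrow> 0 < b \<and> discrim a b c < b\<^sup>2"
  proof (cases "0 < b")
    case True
    then show ?thesis by (simp add: w_def sqrt_less_iff_less_power2)
  qed (use \<open>0 \<le> w\<close> in linarith)
  also have "\<dots> \<longleftrightarrow> 0 < b \<and> c < 0"
    using a by (auto simp: discrim_def mult_neg_neg zero_less_mult_iff)
  also have "b + w < -2 * a \<longleftrightarrow> b < -2 * a"
  proof -
    have "0 < a * (a + b + c)" using a abc by (simp add: mult_neg_neg)
    then have "discrim a b c < (-2 * a - b)\<^sup>2"
      by (simp add: discrim_def power2_eq_square algebra_simps)
    then have "b < -2 * a \<Longrightarrow> w < -2 * a - b"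
      by (simp add: w_def sqrt_less_iff_less_power2)
    then show ?thesis using \<open>0 \<le> w\<close> by linarith
  qed
  finally show ?thesis using D by auto
qed (simp add: two_roots_in_unit_interval_def)

lemma has_integral_from_real_derivative:
  fixes F f :: "real \<Rightarrow> real"
  assumes "a \<le> b" "\<And>x. x \<in> {a..b} \<Longrightarrow> (F has_real_derivative f x) (at x)"
  shows "(f has_integral (F b - F a)) {a..b}"
  using assms by (intro fundamental_theorem_of_calculus)
    (auto simp: has_real_derivative_iff_has_vector_derivative[symmetric] intro: has_field_derivative_at_within)

lemma emeasure_pair_uniform_measure:
  assumes A: "A \<in> sets M" "emeasure M A = 1" and B: "B \<in> sets N" "emeasure N B = 1"
    and X: "X \<in> sets (M \<Otimes>\<^sub>M N)"
  shows "emeasure (uniform_measure M A \<Otimes>\<^sub>M uniform_measure N B) X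
    = (\<integral>\<^sup>+x. emeasure N (B \<inter> Pair x -` X) * indicator A x \<partial>M)"
proof -
  interpret N': prob_space "uniform_measure N B"
    by (rule prob_space_uniform_measure) (simp_all add: B)
  have "sets (uniform_measure M A \<Otimes>\<^sub>M uniform_measure N B) = sets (M \<Otimes>\<^sub>M N)"
    by (intro sets_pair_measure_cong) simp_all
  then have X': "X \<in> sets (uniform_measure M A \<Otimes>\<^sub>M uniform_measure N B)" using X by simp
  have "(\<lambda>x. emeasure (uniform_measure N B) (Pair x -` X)) \<in> borel_measurable (uniform_measure M A)"
    by (rule N'.measurable_emeasure_Pair[OF X'])
  then have meas: "(\<lambda>x. emeasure (uniform_measure N B) (Pair x -` X)) \<in> borel_measurable M"
    by (simp only: measurable_cong_sets[OF sets_uniform_measure refl])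
  have div1: "x / 1 = x" for x :: ennreal by (simp add: divide_ennreal_def)
  have "emeasure (uniform_measure M A \<Otimes>\<^sub>M uniform_measure N B) X
      = (\<integral>\<^sup>+x. emeasure (uniform_measure N B) (Pair x -` X) \<partial>uniform_measure M A)"
    by (rule N'.emeasure_pair_measure_alt[OF X'])
  also have "\<dots> = (\<integral>\<^sup>+x. emeasure (uniform_measure N B) (Pair x -` X) * indicator A x \<partial>M)"
    by (simp only: nn_integral_uniform_measure[OF meas A(1)] A(2) div1)
  also have "\<dots> = (\<integral>\<^sup>+x. emeasure N (B \<inter> Pair x -` X) * indicator A x \<partial>M)"
    by (intro nn_integral_cong) (simp only: emeasure_uniform_measure[OF B(1) sets_Pair1[OF X]] B(2) div1)
  finally show ?thesis .
qed

lemma P_TS_eq: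
  "P_TS q T S x = x * ((T + S - 1) * x\<^sup>2 + (1 - T - 2 * S + q * (S - 1 - T)) * x + (S + q * (T - S)))"
  unfolding P_TS_def by (simp add: algebra_simps power2_eq_square power3_eq_cube)

lemma card_roots_P_TS_eq_3_iff:
  assumes "q \<noteq> 0"
  shows "card {x \<in> {0..1}. P_TS q T S x = 0} = 3 \<longleftrightarrow>
    two_roots_in_unit_interval (T + S - 1) (1 - T - 2 * S + q * (S - 1 - T)) (S + q * (T - S))"
  unfolding P_TS_eq using assms by (intro card_roots_cubic_eq_3_iff) (simp add: algebra_simps)

definition negS_lower :: "real \<Rightarrow> real \<Rightarrow> real" where
  "negS_lower q T = q * T / (1 - q)"

definition negS_upper :: "real \<Rightarrow> real \<Rightarrow> real" where
  "negS_upper q T = ((1 - q) * (1 + T) - 2 * sqrt ((1 - 2 * q) * T)) / q"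

lemma discrim_stag_hunt_pos_iff:
  assumes q: "0 < q" "q < 1/2" and T: "0 \<le> T" and S: "-1 < S"
  shows "discrim (T + S - 1) (1 - T - 2 * S + q * (S - 1 - T)) (S + q * (T - S)) > 0
    \<longleftrightarrow> -S < negS_upper q T"
proof -
  define X where "X = (1 - q) * (1 + T) + q * S"
  have "q * (-S) < q * 1" using q S by (intro mult_strict_left_mono) auto
  moreover have "1 - q \<le> (1 - q) * (1 + T)" using q T by simp
  ultimately have "0 \<le> X" using q unfolding X_def by linarith
  have "discrim (T + S - 1) (1 - T - 2 * S + q * (S - 1 - T)) (S + q * (T - S))
      = X\<^sup>2 - 4 * ((1 - 2 * q) * T)"
    by (simp add: X_def discrim_def power2_eq_square algebra_simps)
  also have "\<dots> > 0 \<longleftrightarrow> sqrt (4 * ((1 - 2 * q) * T)) < X"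
    using \<open>0 \<le> X\<close> by (simp add: sqrt_less_iff_less_power2)
  also have "sqrt (4 * ((1 - 2 * q) * T)) = 2 * sqrt ((1 - 2 * q) * T)"
    by (simp add: real_sqrt_mult)
  also have "2 * sqrt ((1 - 2 * q) * T) < X \<longleftrightarrow> -S < negS_upper q T"
    using q by (simp add: X_def negS_upper_def less_divide_eq algebra_simps)
  finally show ?thesis .
qed

lemma card_roots_P_TS_eq_3_iff_bounds:
  assumes q: "0 < q" "q < 1/2" and T: "0 < T" "T < 1" and S: "-1 < S" "S < 0"
  shows "card {x \<in> {0..1}. P_TS q T S x = 0} = 3 \<longleftrightarrow> negS_lower q T < -S \<and> -S < negS_upper q T"
proof -
  define a b c where "a = T + S - 1" and "b = 1 - T - 2 * S + q * (S - 1 - T)"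
    and "c = S + q * (T - S)"
  have "a < 0" using T S by (simp add: a_def)
  have "a + b + c < 0" using q by (simp add: a_def b_def c_def algebra_simps)
  then have card_iff: "card {x \<in> {0..1}. P_TS q T S x = 0} = 3 \<longleftrightarrow>
      discrim a b c > 0 \<and> c < 0 \<and> 0 < b \<and> b < -2 * a"
    using q \<open>a < 0\<close> card_roots_P_TS_eq_3_iff[of q T S] two_roots_in_unit_interval_iff[of a b c]
    by (simp add: a_def b_def c_def)
  have discrim_iff: "discrim a b c > 0 \<longleftrightarrow> -S < negS_upper q T"
    unfolding a_def b_def c_def using q T S by (intro discrim_stag_hunt_pos_iff) auto
  have c_iff: "c < 0 \<longleftrightarrow> negS_lower q T < -S"
    using q by (simp add: c_def negS_lower_def divide_less_eq algebra_simps)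
  have b_pos: "0 < b" if "c < 0"
  proof -
    have "q * T < (1 - q) * (-S)" using that by (simp add: c_def algebra_simps)
    then have "(2 - q) * (q * T) < (2 - q) * ((1 - q) * (-S))"
      by (rule mult_strict_left_mono) (use q in simp)
    moreover have "(1 - 2 * q) * T < 1 - 2 * q" using q T by simp
    moreover have "(1 - q) * b = (1 - q)\<^sup>2 - (1 + q) * (1 - q) * T + (2 - q) * ((1 - q) * (-S))"
      by (simp add: b_def power2_eq_square algebra_simps)
    ultimately have "q\<^sup>2 < (1 - q) * b" by (simp add: power2_eq_square algebra_simps)
    then have "0 < (1 - q) * b" by (smt (verit) zero_le_power2)
    then show "0 < b" using q by (simp add: zero_less_mult_iff)
  qed
  have "(1 - q) * T < 1 - q" "q * S < 0" using q T S by (simp_all add: mult_pos_neg)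
  then have b_small: "b < -2 * a" using q by (simp add: a_def b_def algebra_simps)
  show ?thesis unfolding card_iff discrim_iff c_iff[symmetric] using b_pos b_small by auto
qed

lemma negS_lower_le_negS_upper:
  assumes q: "0 < q" "q < 1/2" and T: "0 \<le> T"
  shows "negS_lower q T \<le> negS_upper q T"
proof -
  define z where "z = sqrt ((1 - 2 * q) * T)"
  define V where "V = (1 - q) * (1 + T) - 2 * z"
  have "z\<^sup>2 = (1 - 2 * q) * T" using q T by (simp add: z_def)
  then have "(1 - q) * V - q\<^sup>2 * T = ((1 - q) - z)\<^sup>2"
    by (simp add: V_def power2_eq_square algebra_simps)
  then have "q\<^sup>2 * T \<le> (1 - q) * V" by (smt (verit) zero_le_power2)
  then show ?thesis
    using q by (simp add: negS_lower_def negS_upper_def z_def V_def field_simps power2_eq_square)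
qed

definition section_length :: "real \<Rightarrow> real \<Rightarrow> real" where
  "section_length q T = min 1 (negS_upper q T) - negS_lower q T"

lemma section_length_nonneg:
  assumes q: "0 < q" "q < 1/2" and T: "0 \<le> T" "T \<le> 1"
  shows "0 \<le> section_length q T"
proof -
  have "q * T \<le> 1 - q" using q T mult_left_le[of T q] by linarith
  then have "negS_lower q T \<le> 1" using q by (simp add: negS_lower_def divide_le_eq)
  then show ?thesis
    using negS_lower_le_negS_upper[OF q T(1)] by (simp add: section_length_def)
qed

lemma emeasure_three_roots_section:
  assumes q: "0 < q" "q < 1/2" and T: "0 < T" "T < 1"
  shows "emeasure lborel ({S. card {x \<in> {0..1}. P_TS q T S x = 0} = 3} \<inter> {-1<..<0})
    = ennreal (section_length q T)"
proof -
  have "0 \<le> negS_lower q T" using q T by (simp add: negS_lower_def)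
  then have "{S. card {x \<in> {0..1}. P_TS q T S x = 0} = 3} \<inter> {-1<..<0}
      = {max (-1) (- negS_upper q T) <..< - negS_lower q T}"
    using card_roots_P_TS_eq_3_iff_bounds[OF q T] by auto
  moreover have "max (-1) (- negS_upper q T) \<le> - negS_lower q T"
    using section_length_nonneg[OF q] T by (simp add: section_length_def)
  ultimately show ?thesis by (simp add: section_length_def min_def max_def)
qed

(* The zeros, as functions of sqrt T, of the factorisation in negS_upper_minus_one_eq below. *)
definition t_minus :: "real \<Rightarrow> real" where
  "t_minus q = sqrt (1 - 2 * q) / (1 + sqrt q)"

definition t_plus :: "real \<Rightarrow> real" where
  "t_plus q = sqrt (1 - 2 * q) / (1 - sqrt q)"

lemma negS_upper_minus_one_eq:
  assumes q: "0 < q" "q < 1/2" and T: "0 \<le> T"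
  shows "q * (negS_upper q T - 1) =
    ((1 + sqrt q) * sqrt T - sqrt (1 - 2 * q)) * ((1 - sqrt q) * sqrt T - sqrt (1 - 2 * q))"
proof -
  have "q * negS_upper q T = (1 - q) * (1 + T) - 2 * sqrt (1 - 2 * q) * sqrt T"
    using q by (simp add: negS_upper_def real_sqrt_mult)
  moreover have "sqrt q * sqrt q = q" "sqrt (1 - 2 * q) * sqrt (1 - 2 * q) = 1 - 2 * q"
    "sqrt T * sqrt T = T" using q T by simp_all
  ultimately show ?thesis by algebra
qed

lemma t_minus_t_plus:
  assumes q: "0 < q" "q < 1/2"
  shows "0 < t_minus q" "t_minus q < 1" "t_minus q < t_plus q" "1 \<le> t_plus q \<longleftrightarrow> q \<le> 4/9"
proof -
  define s r where "s = sqrt q" and "r = sqrt (1 - 2 * q)"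
  have s: "0 < s" "s < 1" "s * s = q" using q by (auto simp: s_def)
  have r: "0 < r" "r < 1" "r * r = 1 - 2 * q" using q by (auto simp: r_def)
  have tm: "t_minus q = r / (1 + s)" and tp: "t_plus q = r / (1 - s)"
    by (simp_all add: t_minus_def t_plus_def s_def r_def)
  show "0 < t_minus q" "t_minus q < 1" using s r by (simp_all add: tm divide_less_eq)
  show "t_minus q < t_plus q" unfolding tm tp
    by (rule divide_strict_left_mono) (use s r in auto)
  have "1 \<le> t_plus q \<longleftrightarrow> 1 - s \<le> r"
    using s by (simp add: tp le_divide_eq)
  also have "\<dots> \<longleftrightarrow> (1 - s)\<^sup>2 \<le> r\<^sup>2"
    using s r by (simp add: power2_le_iff_abs_le)
  also have "\<dots> \<longleftrightarrow> s * (3 * s - 2) \<le> 0"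
  proof -
    have r2: "r\<^sup>2 = 1 - 2 * s\<^sup>2" using r s by (simp add: power2_eq_square)
    show ?thesis unfolding r2 by (simp add: power2_eq_square algebra_simps)
  qed
  also have "\<dots> \<longleftrightarrow> s \<le> 2/3"
    using s by (simp add: mult_le_0_iff) linarith
  also have "\<dots> \<longleftrightarrow> q \<le> 4/9"
  proof -
    have "sqrt (4/9) = (2/3 :: real)" by (rule real_sqrt_unique) (simp_all add: power2_eq_square)
    then show ?thesis unfolding s_def by (metis real_sqrt_le_iff)
  qed
  finally show "1 \<le> t_plus q \<longleftrightarrow> q \<le> 4/9" .
qed

lemma one_le_negS_upper:
  assumes q: "0 < q" "q < 1/2" and T: "0 \<le> T" "T \<le> (t_minus q)\<^sup>2 \<or> (t_plus q)\<^sup>2 \<le> T"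
  shows "1 \<le> negS_upper q T"
proof -
  define s r where "s = sqrt q" and "r = sqrt (1 - 2 * q)"
  have s: "0 < s" "s < 1" using q by (auto simp: s_def)
  have "0 < t_minus q" "t_minus q < t_plus q" using t_minus_t_plus[OF q] by auto
  then have "sqrt T \<le> t_minus q \<or> t_plus q \<le> sqrt T"
    using T by (auto intro: real_le_lsqrt real_le_rsqrt)
  moreover have "t_minus q = r / (1 + s)" "t_plus q = r / (1 - s)"
    by (simp_all add: t_minus_def t_plus_def s_def r_def)
  ultimately have "(1 + s) * sqrt T \<le> r \<or> r \<le> (1 - s) * sqrt T"
    using s T by (auto simp: le_divide_eq divide_le_eq mult.commute)
  moreover have "(1 - s) * sqrt T \<le> (1 + s) * sqrt T"
    using s T by (intro mult_right_mono) auto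
  ultimately have "0 \<le> ((1 + s) * sqrt T - r) * ((1 - s) * sqrt T - r)"
    unfolding zero_le_mult_iff by linarith
  then have "0 \<le> q * (negS_upper q T - 1)"
    using negS_upper_minus_one_eq[OF q T(1)] by (simp add: s_def r_def)
  then show ?thesis using q by (simp add: zero_le_mult_iff)
qed

lemma negS_upper_le_one:
  assumes q: "0 < q" "q < 1/2" and T: "(t_minus q)\<^sup>2 \<le> T" "T \<le> (t_plus q)\<^sup>2"
  shows "negS_upper q T \<le> 1"
proof -
  define s r where "s = sqrt q" and "r = sqrt (1 - 2 * q)"
  have s: "0 < s" "s < 1" using q by (auto simp: s_def)
  have "0 < t_minus q" "0 < t_plus q" using t_minus_t_plus[OF q] by auto
  then have "0 \<le> T" "t_minus q \<le> sqrt T" "sqrt T \<le> t_plus q"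
    using T by (auto intro: real_le_lsqrt real_le_rsqrt order.trans[OF zero_le_power2])
  moreover have "t_minus q = r / (1 + s)" "t_plus q = r / (1 - s)"
    by (simp_all add: t_minus_def t_plus_def s_def r_def)
  ultimately have "r \<le> (1 + s) * sqrt T" "(1 - s) * sqrt T \<le> r"
    using s by (auto simp: le_divide_eq divide_le_eq mult.commute)
  then have "((1 + s) * sqrt T - r) * ((1 - s) * sqrt T - r) \<le> 0"
    by (intro mult_nonneg_nonpos) auto
  then have "q * (negS_upper q T - 1) \<le> 0"
    using negS_upper_minus_one_eq[OF q \<open>0 \<le> T\<close>] by (simp add: s_def r_def)
  then show ?thesis using q by (simp add: mult_le_0_iff)
qed

definition prim_lower :: "real \<Rightarrow> real \<Rightarrow> real" where
  "prim_lower q T = T - q / (2 * (1 - q)) * T\<^sup>2"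

definition prim_upper :: "real \<Rightarrow> real \<Rightarrow> real" where
  "prim_upper q T = T - (1 - q) / q * (T + T\<^sup>2 / 2) + 4 / (3 * q) * sqrt (1 - 2 * q) * (T * sqrt T)"

lemma has_real_derivative_prim_lower:
  assumes "q \<noteq> 1"
  shows "(prim_lower q has_real_derivative 1 - negS_lower q x) (at x)"
  unfolding prim_lower_def negS_lower_def
  by (rule derivative_eq_intros refl | simp)+ (use assms in \<open>simp add: field_simps\<close>)

lemma has_real_derivative_prim_upper:
  assumes q: "0 < q" "q < 1/2" and x: "0 < x"
  shows "(prim_upper q has_real_derivative 1 - negS_upper q x) (at x)"
proof -
  have d1: "((\<lambda>T. T * sqrt T) has_real_derivative 3/2 * sqrt x) (at x)"
  proof (rule DERIV_cong)
    show "((\<lambda>T. T * sqrt T) has_real_derivative 1 * sqrt x + inverse (sqrt x) / 2 * x) (at x)"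
      by (intro DERIV_mult DERIV_ident DERIV_real_sqrt x)
    show "1 * sqrt x + inverse (sqrt x) / 2 * x = 3/2 * sqrt x"
      using x by (simp add: field_simps real_div_sqrt)
  qed
  have d2: "((\<lambda>T. T + T\<^sup>2 / 2) has_real_derivative 1 + x) (at x)"
    by (auto intro!: derivative_eq_intros)
  have "(prim_upper q has_real_derivative
      1 - (1 - q) / q * (1 + x) + 4 / (3 * q) * sqrt (1 - 2 * q) * (3/2 * sqrt x)) (at x)"
    unfolding prim_upper_def
    by (rule DERIV_add[OF DERIV_diff[OF DERIV_ident DERIV_cmult[OF d2]] DERIV_cmult[OF d1]])
  moreover have "1 - (1 - q) / q * (1 + x) + 4 / (3 * q) * sqrt (1 - 2 * q) * (3/2 * sqrt x)
      = 1 - negS_upper q x"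
    using q x unfolding negS_upper_def real_sqrt_mult[of "1 - 2 * q" x] by (simp add: field_simps)
  ultimately show ?thesis by (rule DERIV_cong)
qed

definition section_integral :: "real \<Rightarrow> real" where
  "section_integral q = prim_lower q 1 - prim_lower q 0
     - (prim_upper q (min 1 ((t_plus q)\<^sup>2)) - prim_upper q ((t_minus q)\<^sup>2))"

lemma section_length_has_integral:
  assumes q: "0 < q" "q < 1/2"
  shows "(section_length q has_integral section_integral q) {0<..<1}"
proof -
  define a b where "a = (t_minus q)\<^sup>2" and "b = min 1 ((t_plus q)\<^sup>2)"
  have "0 < a" "a < 1" "a \<le> b" "b \<le> 1"
    using t_minus_t_plus[OF q] by (auto simp: a_def b_def power_less_one_iff power_strict_mono less_imp_le)
  have lower_part: "((\<lambda>T. 1 - negS_lower q T) has_integral prim_lower q v - prim_lower q u) {u..v}"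
    if "u \<le> v" for u v
    using that q by (intro has_integral_from_real_derivative has_real_derivative_prim_lower) auto
  have left: "(section_length q has_integral prim_lower q a - prim_lower q 0) {0..a}"
  proof (rule has_integral_eq[OF _ lower_part])
    fix T assume "T \<in> {0..a}"
    then show "1 - negS_lower q T = section_length q T"
      using one_le_negS_upper[OF q] by (simp add: section_length_def a_def)
  qed (use \<open>0 < a\<close> in auto)
  have middle: "(section_length q has_integral
      (prim_lower q b - prim_upper q b) - (prim_lower q a - prim_upper q a)) {a..b}"
  proof (rule has_integral_eq[OF _ has_integral_from_real_derivative])
    fix T assume "T \<in> {a..b}"
    then show "(1 - negS_lower q T) - (1 - negS_upper q T) = section_length q T"
      using negS_upper_le_one[OF q] by (simp add: section_length_def a_def b_def)
  next
    fix T assume "T \<in> {a..b}"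
    then show "((\<lambda>T. prim_lower q T - prim_upper q T) has_real_derivative
        (1 - negS_lower q T) - (1 - negS_upper q T)) (at T)"
      using q \<open>0 < a\<close>
      by (intro DERIV_diff has_real_derivative_prim_lower has_real_derivative_prim_upper) auto
  qed (use \<open>a \<le> b\<close> in auto)
  have right: "(section_length q has_integral prim_lower q 1 - prim_lower q b) {b..1}"
  proof (cases "b = 1")
    case False
    then have "b = (t_plus q)\<^sup>2" by (simp add: b_def min_def split: if_splits)
    show ?thesis
    proof (rule has_integral_eq[OF _ lower_part])
      fix T assume "T \<in> {b..1}"
      then show "1 - negS_lower q T = section_length q T"
        using one_le_negS_upper[OF q] \<open>0 < a\<close> \<open>a \<le> b\<close> \<open>b = (t_plus q)\<^sup>2\<close>
        by (simp add: section_length_def)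
    qed (use \<open>b \<le> 1\<close> in auto)
  qed (simp add: has_integral_refl)
  have left_middle: "(section_length q has_integral
      (prim_lower q a - prim_lower q 0)
      + ((prim_lower q b - prim_upper q b) - (prim_lower q a - prim_upper q a))) {0..b}"
    by (rule has_integral_combine[OF _ _ left middle]) (use \<open>0 < a\<close> \<open>a \<le> b\<close> in auto)
  have "(section_length q has_integral
      (prim_lower q a - prim_lower q 0)
      + ((prim_lower q b - prim_upper q b) - (prim_lower q a - prim_upper q a))
      + (prim_lower q 1 - prim_lower q b)) {0..1}"
    by (rule has_integral_combine[OF _ _ left_middle right]) (use \<open>0 < a\<close> \<open>a \<le> b\<close> \<open>b \<le> 1\<close> in auto)
  then show ?thesis
    by (simp add: has_integral_Icc_iff_Ioo section_integral_def a_def[symmetric] b_def[symmetric]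
        algebra_simps)
qed

lemma prim_upper_at_root:
  assumes q: "0 < q" "q < 1/2" and \<sigma>: "\<sigma>\<^sup>2 = q" "0 < 1 + \<sigma>"
  shows "prim_upper q ((sqrt (1 - 2 * q) / (1 + \<sigma>))\<^sup>2)
    = - (1 - 2 * q)\<^sup>2 * (1 + 3 * \<sigma>) / (6 * q * (1 + \<sigma>) ^ 3)"
proof -
  define r p where "r = sqrt (1 - 2 * q)" and "p = 1 + \<sigma>"
  have "0 \<le> r" "r\<^sup>2 = 1 - 2 * q" using q by (simp_all add: r_def)
  have "0 < p" "q \<noteq> 0" using q \<sigma> by (simp_all add: p_def)
  moreover have "sqrt ((r / p)\<^sup>2) = r / p" using \<open>0 \<le> r\<close> \<open>0 < p\<close> by simp
  ultimately show ?thesis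
    unfolding prim_upper_def r_def[symmetric] p_def[symmetric]
    by (simp add: field_simps) (use \<open>r\<^sup>2 = 1 - 2 * q\<close> \<sigma>(1) p_def in algebra)
qed

lemma section_integral_small_q:
  assumes q: "0 < q" "q \<le> 4/9"
  shows "section_integral q =
       1 - q / (2 * (1 - q)) - (1 / (1 - 2 * q)) *
         ( (3 * sqrt q + 2) ^ 2 * sqrt q *
             (5 * q * sqrt q + 3 * q ^ 2 - 9 * q - 3 * sqrt q + 4)
             / (12 * (sqrt q + 1) ^ 3)
         + (- 27 * q ^ 3 - 18 * q ^ 2 - 32 * sqrt (1 - 2 * q) * q + 48 * q
             + 16 * sqrt (1 - 2 * q) - 16) / (12 * q) )"
proof -
  have q2: "q < 1/2" using q by simp
  define s r where "s = sqrt q" and "r = sqrt (1 - 2 * q)"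
  have s: "s\<^sup>2 = q" "0 < s" using q by (simp_all add: s_def)
  have "1 \<le> t_plus q" using t_minus_t_plus[OF q(1) q2] q by simp
  then have "min 1 ((t_plus q)\<^sup>2) = 1" by (simp add: one_le_power)
  then have "section_integral q = 1 - q / (2 * (1 - q)) - prim_upper q 1 + prim_upper q ((t_minus q)\<^sup>2)"
    by (simp add: section_integral_def prim_lower_def)
  also have "prim_upper q 1 = 1 - 3 * (1 - q) / (2 * q) + 4 * r / (3 * q)"
    using q by (simp add: prim_upper_def r_def field_simps)
  also have "prim_upper q ((t_minus q)\<^sup>2) = - (1 - 2 * q)\<^sup>2 * (1 + 3 * s) / (6 * q * (1 + s) ^ 3)"
    unfolding t_minus_def s_def by (rule prim_upper_at_root) (use q in \<open>simp_all add: add_pos_nonneg\<close>)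
  also have "1 - q / (2 * (1 - q)) - (1 - 3 * (1 - q) / (2 * q) + 4 * r / (3 * q))
      + - (1 - 2 * q)\<^sup>2 * (1 + 3 * s) / (6 * q * (1 + s) ^ 3)
      = 1 - q / (2 * (1 - q)) - (1 / (1 - 2 * q)) *
         ( (3 * s + 2) ^ 2 * s * (5 * q * s + 3 * q ^ 2 - 9 * q - 3 * s + 4) / (12 * (s + 1) ^ 3)
         + (- 27 * q ^ 3 - 18 * q ^ 2 - 32 * r * q + 48 * q + 16 * r - 16) / (12 * q) )"
  proof -
    define A B C where "A = 1 - q" and "B = 1 - 2 * q" and "C = 1 + s"
    have "q \<noteq> 0" "A \<noteq> 0" "B \<noteq> 0" "C \<noteq> 0" using s q by (auto simp: A_def B_def C_def)
    then have "1 - q / (2 * A) - (1 - 3 * A / (2 * q) + 4 * r / (3 * q))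
        + - B\<^sup>2 * (1 + 3 * s) / (6 * q * C ^ 3)
      = 1 - q / (2 * A) - (1 / B) *
         ( (3 * s + 2) ^ 2 * s * (5 * q * s + 3 * q ^ 2 - 9 * q - 3 * s + 4) / (12 * C ^ 3)
         + (- 27 * q ^ 3 - 18 * q ^ 2 - 32 * r * q + 48 * q + 16 * r - 16) / (12 * q) )"
      by (simp add: field_simps) (use s(1) A_def B_def C_def in algebra)
    then show ?thesis by (simp add: A_def B_def C_def add.commute)
  qed
  finally show ?thesis by (simp add: s_def r_def)
qed

lemma section_integral_large_q:
  assumes q: "4/9 < q" "q < 1/2"
  shows "section_integral q = 1 - q / (2 * (1 - q)) - 8 * sqrt q * (1 - 2 * q) ^ 2 / (3 * (1 - q) ^ 3)"
proof -
  have q0: "0 < q" using q by simp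
  define s where "s = sqrt q"
  have s: "s\<^sup>2 = q" "0 < s" "s < 1" using q by (simp_all add: s_def)
  have "0 < t_plus q" "t_plus q < 1" using t_minus_t_plus[OF q0 q(2)] q by auto
  then have "min 1 ((t_plus q)\<^sup>2) = (t_plus q)\<^sup>2" by (simp add: power_less_one_iff less_imp_le)
  then have "section_integral q
      = 1 - q / (2 * (1 - q)) - prim_upper q ((t_plus q)\<^sup>2) + prim_upper q ((t_minus q)\<^sup>2)"
    by (simp add: section_integral_def prim_lower_def)
  also have "prim_upper q ((t_minus q)\<^sup>2) = - (1 - 2 * q)\<^sup>2 * (1 + 3 * s) / (6 * q * (1 + s) ^ 3)"
    unfolding t_minus_def s_def by (rule prim_upper_at_root) (use q in \<open>simp_all add: add_pos_nonneg\<close>)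
  also have "prim_upper q ((t_plus q)\<^sup>2) = - (1 - 2 * q)\<^sup>2 * (1 + 3 * (-s)) / (6 * q * (1 + (-s)) ^ 3)"
  proof -
    have "t_plus q = sqrt (1 - 2 * q) / (1 + (-s))" by (simp add: t_plus_def s_def)
    then show ?thesis by (simp only:) (rule prim_upper_at_root, use q s in simp_all)
  qed
  also have "1 - q / (2 * (1 - q)) - (- (1 - 2 * q)\<^sup>2 * (1 + 3 * (-s)) / (6 * q * (1 + (-s)) ^ 3))
      + - (1 - 2 * q)\<^sup>2 * (1 + 3 * s) / (6 * q * (1 + s) ^ 3)
      = 1 - q / (2 * (1 - q)) - 8 * s * (1 - 2 * q)\<^sup>2 / (3 * (1 - q) ^ 3)"
  proof -
    define A C D where "A = 1 - q" and "C = 1 + s" and "D = 1 - s"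
    have "q \<noteq> 0" "A \<noteq> 0" "C \<noteq> 0" "D \<noteq> 0" using s q by (auto simp: A_def C_def D_def)
    then have "- (- (1 - 2 * q)\<^sup>2 * (1 + 3 * (-s)) / (6 * q * D ^ 3))
        + - (1 - 2 * q)\<^sup>2 * (1 + 3 * s) / (6 * q * C ^ 3)
      = - 8 * s * (1 - 2 * q)\<^sup>2 / (3 * A ^ 3)"
      by (simp add: field_simps) (use s(1) A_def C_def D_def in algebra)
    then show ?thesis by (simp add: A_def C_def D_def)
  qed
  finally show ?thesis by (simp add: s_def)
qed

lemma p3_SH_eq_section_integral:
  assumes q: "0 < q" "q < 1/2"
  shows "p3_SH q = section_integral q"
proof -
  have "q \<noteq> 0" using q by simp
  define X :: "(real \<times> real) set"
    where "X = {(T, S). card {x \<in> {0..1}. P_TS q T S x = 0} = 3}"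
  have "X = {p \<in> space (borel \<Otimes>\<^sub>M borel). two_roots_in_unit_interval (fst p + snd p - 1)
      (1 - fst p - 2 * snd p + q * (snd p - 1 - fst p)) (snd p + q * (fst p - snd p))}"
    unfolding X_def card_roots_P_TS_eq_3_iff[OF \<open>q \<noteq> 0\<close>] by (auto simp: space_pair_measure)
  also have "\<dots> \<in> sets (borel \<Otimes>\<^sub>M borel)"
    unfolding two_roots_in_unit_interval_def discrim_def by measurable
  finally have "X \<in> sets (lborel \<Otimes>\<^sub>M lborel)"
    by (simp only: sets_pair_measure_cong[OF sets_lborel sets_lborel])
  then have "emeasure TS_law X
      = (\<integral>\<^sup>+T. emeasure lborel ({-1<..<0} \<inter> Pair T -` X) * indicator {0<..<1} T \<partial>lborel)"
    unfolding TS_law_def by (intro emeasure_pair_uniform_measure) simp_all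
  also have "\<dots> = (\<integral>\<^sup>+T. ennreal (section_length q T) * indicator {0<..<1} T \<partial>lborel)"
  proof (intro nn_integral_cong)
    fix T :: real
    have "{-1<..<0} \<inter> Pair T -` X = {S. card {x \<in> {0..1}. P_TS q T S x = 0} = 3} \<inter> {-1<..<0}"
      by (auto simp: X_def)
    then show "emeasure lborel ({-1<..<0} \<inter> Pair T -` X) * indicator {0<..<1} T
        = ennreal (section_length q T) * indicator {0<..<1} T"
      using emeasure_three_roots_section[OF q, of T] by (simp add: indicator_def)
  qed
  also have "\<dots> = ennreal (section_integral q)"
    using section_length_nonneg[OF q] section_length_has_integral[OF q]
    by (intro nn_integral_has_integral_lebesgue') auto
  finally have "emeasure TS_law X = ennreal (section_integral q)" .
  moreover have "0 \<le> section_integral q"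
    by (rule has_integral_nonneg[OF section_length_has_integral[OF q]])
      (use section_length_nonneg[OF q] in simp)
  moreover have "{(T, S) \<in> space TS_law. card {x \<in> {0..1}. P_TS q T S x = 0} = 3} = X"
    by (simp add: X_def TS_law_def space_pair_measure)
  ultimately show ?thesis by (simp add: p3_SH_def measure_def)
qed

theorem theorem2p3:
  fixes q :: real
  assumes "0 < q" and "q < 1/2"
  shows "p3_SH q =
    (if q \<le> 4/9 then
       1 - q / (2 * (1 - q)) - (1 / (1 - 2 * q)) *
         ( (3 * sqrt q + 2) ^ 2 * sqrt q *
             (5 * q * sqrt q + 3 * q ^ 2 - 9 * q - 3 * sqrt q + 4)
             / (12 * (sqrt q + 1) ^ 3)
         + (- 27 * q ^ 3 - 18 * q ^ 2 - 32 * sqrt (1 - 2 * q) * q + 48 * q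
             + 16 * sqrt (1 - 2 * q) - 16) / (12 * q) )
     else
       1 - q / (2 * (1 - q)) - 8 * sqrt q * (1 - 2 * q) ^ 2 / (3 * (1 - q) ^ 3))"
  using p3_SH_eq_section_integral[OF assms] section_integral_small_q[OF assms(1)]
    section_integral_large_q[OF _ assms(2)]
  by simp

end
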